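(* Let $(X,\Sigma)$ be a measurable space, $p$ a transition function on it with associated operator $A$ on $ba(X,\Sigma)$, and let $K=\{\mu_1,\dots,\mu_m\}$ be a finitely additive cycle of measures of $A$. If at least one cyclic measure $\mu_i$ is purely finitely additive, then all cyclic measures $\mu_1,\dots,\mu_m$ and the mean measure $\frac1m\sum_{k=1}^m\mu_k$ are purely finitely additive.
   Context: $X$ is an arbitrary infinite set and $\Sigma$ a $\sigma$-algebra of subsets of $X$ containing all one-point sets. $ba(X,\Sigma)$ denotes the space of bounded finitely additive real-valued measures on $\Sigma$. A nonnegative finitely additive measure $\mu$ is purely finitely additive if every countably additive measure $\lambda$ with $0\le\lambda\le\mu$ is identically zero. A transition function is a map $p(x,E)$ with $0\le p(x,E)\le 1$, $p(x,X)=1$, $p(\cdot,E)$ bounded $\Sigma$-measurable for every $E\in\Sigma$, and $p(x,\cdot)$ countably additive for every $x\in X$. The Markov operator is $A\mu(E)=\int_X p(x,E)\,\mu(dx)$. A cycle of measures of $A$ is a finite numbered set $\{\mu_1,\dots,\mu_m\}$ of pairwise different positive finitely additive measures with $A\mu_i=\mu_{i+1}$ ($1\le i\le m-1$) and $A\mu_m=\mu_1$; its mean measure is $\frac1m\sum_{k=1}^m\mu_k$. *)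

theory Defs
  imports "HOL-Analysis.Analysis"
begin

definition std_space :: "'a measure \<Rightarrow> bool" where
  "std_space M \<longleftrightarrow> infinite (space M) \<and> (\<forall>x\<in>space M. {x} \<in> sets M)"

definition fa_measure :: "'a measure \<Rightarrow> ('a set \<Rightarrow> real) \<Rightarrow> bool" where
  "fa_measure M \<mu> \<longleftrightarrow> \<mu> {} = 0
     \<and> (\<forall>A\<in>sets M. \<forall>B\<in>sets M. A \<inter> B = {} \<longrightarrow> \<mu> (A \<union> B) = \<mu> A + \<mu> B)
     \<and> (\<exists>C. \<forall>A\<in>sets M. \<bar>\<mu> A\<bar> \<le> C)"

definition pos_fa_measure :: "'a measure \<Rightarrow> ('a set \<Rightarrow> real) \<Rightarrow> bool" where
  "pos_fa_measure M \<mu> \<longleftrightarrow> fa_measure M \<mu> \<and> (\<forall>A\<in>sets M. 0 \<le> \<mu> A)"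

definition ca_on :: "'a measure \<Rightarrow> ('a set \<Rightarrow> real) \<Rightarrow> bool" where
  "ca_on M \<mu> \<longleftrightarrow> (\<forall>F::nat \<Rightarrow> 'a set. range F \<subseteq> sets M \<longrightarrow> disjoint_family F \<longrightarrow>
      (\<lambda>n. \<mu> (F n)) sums \<mu> (\<Union>n. F n))"

definition pure_fa :: "'a measure \<Rightarrow> ('a set \<Rightarrow> real) \<Rightarrow> bool" where
  "pure_fa M \<mu> \<longleftrightarrow> pos_fa_measure M \<mu> \<and>
     (\<forall>\<nu>. fa_measure M \<nu> \<and> ca_on M \<nu> \<and> (\<forall>A\<in>sets M. 0 \<le> \<nu> A \<and> \<nu> A \<le> \<mu> A)
          \<longrightarrow> (\<forall>A\<in>sets M. \<nu> A = 0))"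

definition transition_function :: "'a measure \<Rightarrow> ('a \<Rightarrow> 'a set \<Rightarrow> real) \<Rightarrow> bool" where
  "transition_function M p \<longleftrightarrow>
     (\<forall>x\<in>space M. \<forall>E\<in>sets M. 0 \<le> p x E \<and> p x E \<le> 1)
   \<and> (\<forall>x\<in>space M. p x (space M) = 1)
   \<and> (\<forall>E\<in>sets M. (\<lambda>x. p x E) \<in> borel_measurable M)
   \<and> (\<forall>x\<in>space M. p x {} = 0 \<and> ca_on M (p x))"

definition fa_integral :: "'a measure \<Rightarrow> ('a set \<Rightarrow> real) \<Rightarrow> ('a \<Rightarrow> real) \<Rightarrow> real" where
  "fa_integral M \<mu> f = (SUP P \<in> {P. finite P \<and> P \<subseteq> sets M \<and> disjoint P \<and> \<Union>P = space M}.
      (\<Sum>B\<in>P. (INF x\<in>B. f x) * \<mu> B))"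

definition markov_op :: "'a measure \<Rightarrow> ('a \<Rightarrow> 'a set \<Rightarrow> real) \<Rightarrow> ('a set \<Rightarrow> real) \<Rightarrow> ('a set \<Rightarrow> real)" where
  "markov_op M p \<mu> = (\<lambda>E. fa_integral M \<mu> (\<lambda>x. p x E))"

definition is_cycle :: "'a measure \<Rightarrow> ('a \<Rightarrow> 'a set \<Rightarrow> real) \<Rightarrow> nat \<Rightarrow> (nat \<Rightarrow> 'a set \<Rightarrow> real) \<Rightarrow> bool" where
  "is_cycle M p m \<mu> \<longleftrightarrow> 1 \<le> m
     \<and> (\<forall>i\<in>{1..m}. pos_fa_measure M (\<mu> i))
     \<and> (\<forall>i\<in>{1..m}. \<forall>j\<in>{1..m}. i \<noteq> j \<longrightarrow> (\<exists>E\<in>sets M. \<mu> i E \<noteq> \<mu> j E))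
     \<and> (\<forall>i\<in>{1..<m}. \<forall>E\<in>sets M. markov_op M p (\<mu> i) E = \<mu> (Suc i) E)
     \<and> (\<forall>E\<in>sets M. markov_op M p (\<mu> m) E = \<mu> 1 E)"

definition mean_measure :: "nat \<Rightarrow> (nat \<Rightarrow> 'a set \<Rightarrow> real) \<Rightarrow> 'a set \<Rightarrow> real" where
  "mean_measure m \<mu> = (\<lambda>E. (1 / real m) * (\<Sum>k=1..m. \<mu> k E))"

end

theory Submission
  imports Defs
begin

text \<open>
  If \<open>\<mu>\<close> is not purely finitely additive, some nonzero countably additive \<open>\<nu> \<le> \<mu>\<close> exists.
  Then \<open>A \<nu> \<le> A \<mu>\<close>, and \<open>A \<nu>\<close> is again countably additive -- on countably additive
  measures the Darboux integral defining \<open>A\<close> is a Lebesgue integral, so dominated convergence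
  applies -- with the same total mass as \<open>\<nu>\<close>. Hence \<open>A \<mu>\<close> is not pure either, and going
  around the cycle, one pure \<open>\<mu>\<^sub>i\<close> makes all of them pure.

  Pure measures form a convex cone, which gives the mean measure: if a countably additive
  \<open>\<nu>\<close> lies below \<open>\<mu>\<^sub>1 + \<mu>\<^sub>2\<close>, then the lattice infimum \<open>\<nu> \<and> \<mu>\<^sub>1\<close> is countably
  additive (being dominated by \<open>\<nu>\<close>) and below \<open>\<mu>\<^sub>1\<close>, hence zero; this forces
  \<open>\<nu> \<le> \<mu>\<^sub>2\<close> and so \<open>\<nu> = 0\<close>.
\<close>

section \<open>Finitely and countably additive set functions\<close>

lemma fa_measure_empty: "fa_measure M \<mu> \<Longrightarrow> \<mu> {} = 0"
  by (simp add: fa_measure_def)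

lemma pos_fa_measure_empty: "pos_fa_measure M \<mu> \<Longrightarrow> \<mu> {} = 0"
  by (simp add: pos_fa_measure_def fa_measure_def)

lemma fa_measure_Un:
  "fa_measure M \<mu> \<Longrightarrow> A \<in> sets M \<Longrightarrow> B \<in> sets M \<Longrightarrow> A \<inter> B = {} \<Longrightarrow> \<mu> (A \<union> B) = \<mu> A + \<mu> B"
  by (simp add: fa_measure_def)

lemma fa_measure_Diff:
  assumes "fa_measure M \<mu>" "A \<in> sets M" "B \<in> sets M" "B \<subseteq> A"
  shows "\<mu> A = \<mu> B + \<mu> (A - B)"
  using fa_measure_Un[OF assms(1), of B "A - B"] assms(2-4) by (simp add: Un_absorb1)

lemma pos_fa_measure_mono:
  assumes "pos_fa_measure M \<mu>" "A \<in> sets M" "B \<in> sets M" "B \<subseteq> A"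
  shows "\<mu> B \<le> \<mu> A"
  using assms fa_measure_Diff[of M \<mu> A B] by (auto simp: pos_fa_measure_def)

lemma fa_measure_UN_lessThan:
  fixes n :: nat
  assumes "fa_measure M \<mu>" "range F \<subseteq> sets M" "disjoint_family F"
  shows "\<mu> (\<Union>i<n. F i) = (\<Sum>i<n. \<mu> (F i))"
proof (induction n)
  case 0
  then show ?case using fa_measure_empty[OF assms(1)] by simp
next
  case (Suc n)
  have "F i \<inter> F n = {}" if "i < n" for i
    using assms(3) that by (simp add: disjoint_family_on_def)
  then have "(\<Union>i<n. F i) \<inter> F n = {}"
    by blast
  moreover have "(\<Union>i<n. F i) \<in> sets M" "F n \<in> sets M"
    using assms(2) by auto
  ultimately have "\<mu> ((\<Union>i<n. F i) \<union> F n) = \<mu> (\<Union>i<n. F i) + \<mu> (F n)"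
    using fa_measure_Un[OF assms(1)] by blast
  moreover have "(\<Union>i<Suc n. F i) = (\<Union>i<n. F i) \<union> F n"
    by (auto simp: lessThan_Suc)
  ultimately show ?case
    using Suc.IH by simp
qed

lemma fa_measure_Union:
  assumes "fa_measure M \<mu>" "finite P" "P \<subseteq> sets M" "disjoint P"
  shows "\<mu> (\<Union>P) = sum \<mu> P"
  using assms(2-4)
proof (induction P rule: finite_induct)
  case empty
  then show ?case using fa_measure_empty[OF assms(1)] by simp
next
  case (insert S P)
  have "S \<inter> \<Union>P = {}"
    using insert.prems(2) insert.hyps(2) by (auto simp: pairwise_insert disjnt_def)
  moreover have "\<Union>P \<in> sets M"
    using insert.prems(1) insert.hyps(1) by (intro sets.finite_Union) auto
  ultimately show ?case
    using fa_measure_Un[OF assms(1)] insert by (auto simp: pairwise_insert)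
qed

lemma ca_on_empty:
  assumes "ca_on M \<mu>"
  shows "\<mu> {} = 0"
proof -
  have "(\<lambda>n. \<mu> {}) sums \<mu> {}"
    using assms unfolding ca_on_def
    by (drule_tac x="\<lambda>n. {}" in spec) (simp add: disjoint_family_on_def)
  then have "(\<lambda>n. \<mu> {}) \<longlonglongrightarrow> 0"
    by (intro summable_LIMSEQ_zero sums_summable)
  then show ?thesis
    by (simp add: LIMSEQ_const_iff)
qed

lemma ca_on_Un:
  assumes ca: "ca_on M \<mu>" and "A \<in> sets M" "B \<in> sets M" "A \<inter> B = {}"
  shows "\<mu> (A \<union> B) = \<mu> A + \<mu> B"
proof -
  have "range (binaryset A B) \<subseteq> sets M" "disjoint_family (binaryset A B)"
    using assms(2-4) by (auto simp: range_binaryset_eq disjoint_family_on_def binaryset_def)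
  then have "(\<lambda>n. \<mu> (binaryset A B n)) sums \<mu> (\<Union>n. binaryset A B n)"
    using ca by (simp add: ca_on_def)
  then have "(\<lambda>n. \<mu> (binaryset A B n)) sums \<mu> (A \<union> B)"
    by (simp only: UN_binaryset_eq)
  then show ?thesis
    using binaryset_sums[of \<mu>, OF ca_on_empty[OF ca]] by (rule sums_unique2)
qed

lemma ca_on_dominated:
  assumes pos1: "pos_fa_measure M \<nu>1" and fa: "fa_measure M \<nu>" and ca: "ca_on M \<nu>"
    and le: "\<forall>A\<in>sets M. \<nu>1 A \<le> \<nu> A"
  shows "ca_on M \<nu>1"
  unfolding ca_on_def
proof (intro allI impI)
  fix F :: "nat \<Rightarrow> 'a set"
  assume F: "range F \<subseteq> sets M" and disj: "disjoint_family F"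
  define U where "U = (\<Union>n. F n)"
  define V where "V n = (\<Union>i<n. F i)" for n
  have U: "U \<in> sets M" and V: "V n \<in> sets M" and VU: "V n \<subseteq> U" for n
    using F by (auto simp: U_def V_def)
  have fa1: "fa_measure M \<nu>1"
    using pos1 by (simp add: pos_fa_measure_def)
  \<comment> \<open>The tails \<open>\<nu>1 (U - V n)\<close> are squeezed between 0 and the tails of \<open>\<nu>\<close>.\<close>
  have "(\<lambda>n. \<nu> (F n)) sums \<nu> U"
    using ca F disj by (simp add: ca_on_def U_def)
  then have lim: "(\<lambda>n. \<nu> (V n)) \<longlonglongrightarrow> \<nu> U"
    by (simp add: sums_def V_def fa_measure_UN_lessThan[OF fa F disj])
  then have tail: "(\<lambda>n. \<nu> U - \<nu> (V n)) \<longlonglongrightarrow> 0"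
    using tendsto_diff[OF tendsto_const lim, of "\<nu> U"] by simp
  have bounds: "0 \<le> \<nu>1 U - \<nu>1 (V n)" "\<nu>1 U - \<nu>1 (V n) \<le> \<nu> U - \<nu> (V n)" for n
  proof -
    have "U - V n \<in> sets M"
      using U V by blast
    then have "0 \<le> \<nu>1 (U - V n)" "\<nu>1 (U - V n) \<le> \<nu> (U - V n)"
      using pos1 le by (auto simp: pos_fa_measure_def)
    then show "0 \<le> \<nu>1 U - \<nu>1 (V n)" "\<nu>1 U - \<nu>1 (V n) \<le> \<nu> U - \<nu> (V n)"
      using fa_measure_Diff[OF fa1 U V VU, of n] fa_measure_Diff[OF fa U V VU, of n] by linarith+
  qed
  have "(\<lambda>n. \<nu>1 U - \<nu>1 (V n)) \<longlonglongrightarrow> 0"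
    by (rule real_tendsto_sandwich[OF always_eventually always_eventually tendsto_const tail])
      (use bounds in auto)
  then have "(\<lambda>n. \<nu>1 U - (\<nu>1 U - \<nu>1 (V n))) \<longlonglongrightarrow> \<nu>1 U - 0"
    by (rule tendsto_diff[OF tendsto_const])
  then have "(\<lambda>n. \<nu>1 (V n)) \<longlonglongrightarrow> \<nu>1 U"
    by simp
  then show "(\<lambda>n. \<nu>1 (F n)) sums \<nu>1 (\<Union>n. F n)"
    unfolding sums_def U_def V_def fa_measure_UN_lessThan[OF fa1 F disj, symmetric] .
qed

lemma pos_fa_measure_scale:
  assumes "pos_fa_measure M \<mu>" "0 \<le> c"
  shows "pos_fa_measure M (\<lambda>E. c * \<mu> E)"
proof -
  obtain C where "\<forall>A\<in>sets M. \<bar>\<mu> A\<bar> \<le> C"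
    using assms(1) by (auto simp: pos_fa_measure_def fa_measure_def)
  then have "\<forall>A\<in>sets M. \<bar>c * \<mu> A\<bar> \<le> c * C"
    using assms(2) by (simp add: abs_mult mult_left_mono)
  then show ?thesis
    using assms by (auto simp: pos_fa_measure_def fa_measure_def distrib_left)
qed

lemma pos_fa_measure_add:
  assumes "pos_fa_measure M \<mu>1" "pos_fa_measure M \<mu>2"
  shows "pos_fa_measure M (\<lambda>E. \<mu>1 E + \<mu>2 E)"
proof -
  obtain C1 C2 where "\<forall>A\<in>sets M. \<bar>\<mu>1 A\<bar> \<le> C1" "\<forall>A\<in>sets M. \<bar>\<mu>2 A\<bar> \<le> C2"
    using assms by (auto simp: pos_fa_measure_def fa_measure_def)
  then have "\<forall>A\<in>sets M. \<bar>\<mu>1 A + \<mu>2 A\<bar> \<le> C1 + C2"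
    by (smt (verit))
  then show ?thesis
    using assms by (auto simp: pos_fa_measure_def fa_measure_def)
qed

lemma ca_on_scale: "ca_on M \<mu> \<Longrightarrow> ca_on M (\<lambda>E. c * \<mu> E)"
  by (auto simp: ca_on_def intro: sums_mult)


section \<open>Purely finitely additive measures\<close>

lemma pure_faI:
  assumes "pos_fa_measure M \<mu>"
    and "\<And>\<nu> A. pos_fa_measure M \<nu> \<Longrightarrow> ca_on M \<nu> \<Longrightarrow> \<forall>E\<in>sets M. \<nu> E \<le> \<mu> E \<Longrightarrow>
      A \<in> sets M \<Longrightarrow> \<nu> A = 0"
  shows "pure_fa M \<mu>"
  using assms by (auto simp: pure_fa_def pos_fa_measure_def)

lemma pure_faD:
  assumes "pure_fa M \<mu>" "pos_fa_measure M \<nu>" "ca_on M \<nu>" "\<forall>E\<in>sets M. \<nu> E \<le> \<mu> E"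
    "A \<in> sets M"
  shows "\<nu> A = 0"
  using assms by (auto simp: pure_fa_def pos_fa_measure_def)

lemma pure_fa_imp_pos_fa_measure: "pure_fa M \<mu> \<Longrightarrow> pos_fa_measure M \<mu>"
  by (simp add: pure_fa_def)

lemma pure_fa_zero: "pure_fa M (\<lambda>E. 0)"
  by (rule pure_faI) (auto simp: pos_fa_measure_def fa_measure_def intro: order_antisym)

lemma pure_fa_scale:
  assumes pure: "pure_fa M \<mu>" and "0 < c"
  shows "pure_fa M (\<lambda>E. c * \<mu> E)"
proof (rule pure_faI)
  show "pos_fa_measure M (\<lambda>E. c * \<mu> E)"
    using assms pure_fa_imp_pos_fa_measure pos_fa_measure_scale by fastforce
  fix \<nu> A
  assume \<nu>: "pos_fa_measure M \<nu>" "ca_on M \<nu>" and le: "\<forall>E\<in>sets M. \<nu> E \<le> c * \<mu> E"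
    and A: "A \<in> sets M"
  have "pos_fa_measure M (\<lambda>E. inverse c * \<nu> E)" "ca_on M (\<lambda>E. inverse c * \<nu> E)"
    using \<nu> \<open>0 < c\<close> by (auto intro: pos_fa_measure_scale ca_on_scale)
  moreover have "\<forall>E\<in>sets M. inverse c * \<nu> E \<le> \<mu> E"
    using le \<open>0 < c\<close> by (auto simp: field_simps)
  ultimately have "inverse c * \<nu> A = 0"
    by (rule pure_faD[OF pure _ _ _ A])
  then show "\<nu> A = 0"
    using \<open>0 < c\<close> by simp
qed

text \<open>The lattice infimum \<open>\<nu> \<and> \<mu>\<close> in \<open>ba(X,\<Sigma>)\<close>.\<close>

definition fa_inf :: "'a measure \<Rightarrow> ('a set \<Rightarrow> real) \<Rightarrow> ('a set \<Rightarrow> real) \<Rightarrow> 'a set \<Rightarrow> real" where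
  "fa_inf M \<nu> \<mu> E = (INF F\<in>{F\<in>sets M. F \<subseteq> E}. \<nu> F + \<mu> (E - F))"

context
  fixes M :: "'a measure" and \<nu> \<mu> :: "'a set \<Rightarrow> real"
  assumes \<nu>: "pos_fa_measure M \<nu>" and \<mu>: "pos_fa_measure M \<mu>"
begin

private lemma fa: "fa_measure M \<nu>" "fa_measure M \<mu>"
  using \<nu> \<mu> by (simp_all add: pos_fa_measure_def)

private lemma fa_inf_bdd_below: "E \<in> sets M \<Longrightarrow> bdd_below ((\<lambda>F. \<nu> F + \<mu> (E - F)) ` {F\<in>sets M. F \<subseteq> E})"
  using \<nu> \<mu> by (intro bdd_belowI[where m=0]) (auto simp: pos_fa_measure_def)

lemma fa_inf_le:
  assumes "E \<in> sets M" "F \<in> sets M" "F \<subseteq> E"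
  shows "fa_inf M \<nu> \<mu> E \<le> \<nu> F + \<mu> (E - F)"
  unfolding fa_inf_def using assms by (intro cINF_lower fa_inf_bdd_below) auto

lemma fa_inf_greatest:
  assumes "\<And>F. F \<in> sets M \<Longrightarrow> F \<subseteq> E \<Longrightarrow> c \<le> \<nu> F + \<mu> (E - F)"
  shows "c \<le> fa_inf M \<nu> \<mu> E"
  unfolding fa_inf_def using assms by (intro cINF_greatest) auto

lemma fa_inf_nonneg: "E \<in> sets M \<Longrightarrow> 0 \<le> fa_inf M \<nu> \<mu> E"
  using \<nu> \<mu> by (intro fa_inf_greatest) (auto simp: pos_fa_measure_def)

lemma fa_inf_le_left: "E \<in> sets M \<Longrightarrow> fa_inf M \<nu> \<mu> E \<le> \<nu> E"
  using fa_inf_le[of E E] fa_measure_empty[OF fa(2)] by simp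

lemma fa_inf_le_right: "E \<in> sets M \<Longrightarrow> fa_inf M \<nu> \<mu> E \<le> \<mu> E"
  using fa_inf_le[of E "{}"] fa_measure_empty[OF fa(1)] by simp

private lemma fa_inf_term_split:
  assumes E1: "E1 \<in> sets M" and E2: "E2 \<in> sets M" and disj: "E1 \<inter> E2 = {}"
    and F: "F \<in> sets M" "F \<subseteq> E1 \<union> E2"
  shows "\<nu> F + \<mu> (E1 \<union> E2 - F)
    = (\<nu> (F \<inter> E1) + \<mu> (E1 - F \<inter> E1)) + (\<nu> (F \<inter> E2) + \<mu> (E2 - F \<inter> E2))"
proof -
  have "(F \<inter> E1) \<union> (F \<inter> E2) = F"
    using F by blast
  moreover have "\<nu> ((F \<inter> E1) \<union> (F \<inter> E2)) = \<nu> (F \<inter> E1) + \<nu> (F \<inter> E2)"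
    by (rule fa_measure_Un[OF fa(1)]) (use F E1 E2 disj in auto)
  moreover have "(E1 - F) \<union> (E2 - F) = E1 \<union> E2 - F"
    by blast
  moreover have "\<mu> ((E1 - F) \<union> (E2 - F)) = \<mu> (E1 - F) + \<mu> (E2 - F)"
    by (rule fa_measure_Un[OF fa(2)]) (use F E1 E2 disj in auto)
  moreover have "E1 - F \<inter> E1 = E1 - F" "E2 - F \<inter> E2 = E2 - F"
    by auto
  ultimately show ?thesis
    by simp
qed

lemma fa_inf_Un:
  assumes E1: "E1 \<in> sets M" and E2: "E2 \<in> sets M" and disj: "E1 \<inter> E2 = {}"
  shows "fa_inf M \<nu> \<mu> (E1 \<union> E2) = fa_inf M \<nu> \<mu> E1 + fa_inf M \<nu> \<mu> E2"
proof -
  let ?g = "\<lambda>E F. \<nu> F + \<mu> (E - F)"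
  note split = fa_inf_term_split[OF E1 E2 disj]
  \<comment> \<open>Subsets \<open>F\<close> of \<open>E1 \<union> E2\<close> correspond to pairs \<open>(F \<inter> E1, F \<inter> E2)\<close>.\<close>
  have "fa_inf M \<nu> \<mu> E1 + fa_inf M \<nu> \<mu> E2 \<le> fa_inf M \<nu> \<mu> (E1 \<union> E2)"
  proof (rule fa_inf_greatest)
    fix F assume F: "F \<in> sets M" "F \<subseteq> E1 \<union> E2"
    then show "fa_inf M \<nu> \<mu> E1 + fa_inf M \<nu> \<mu> E2 \<le> ?g (E1 \<union> E2) F"
      using fa_inf_le[OF E1, of "F \<inter> E1"] fa_inf_le[OF E2, of "F \<inter> E2"] E1 E2
      by (simp add: split add_mono)
  qed
  moreover have "fa_inf M \<nu> \<mu> (E1 \<union> E2) \<le> ?g E1 F1 + ?g E2 F2"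
    if F1: "F1 \<in> sets M" "F1 \<subseteq> E1" and F2: "F2 \<in> sets M" "F2 \<subseteq> E2" for F1 F2
  proof -
    have "(F1 \<union> F2) \<inter> E1 = F1" "(F1 \<union> F2) \<inter> E2 = F2"
      using F1 F2 disj by auto
    then show ?thesis
      using fa_inf_le[of "E1 \<union> E2" "F1 \<union> F2"] split[of "F1 \<union> F2"] E1 E2 F1 F2 by auto
  qed
  then have "fa_inf M \<nu> \<mu> (E1 \<union> E2) - ?g E2 F2 \<le> fa_inf M \<nu> \<mu> E1"
    if "F2 \<in> sets M" "F2 \<subseteq> E2" for F2
    using that by (intro fa_inf_greatest) (simp add: algebra_simps)
  then have "fa_inf M \<nu> \<mu> (E1 \<union> E2) - fa_inf M \<nu> \<mu> E1 \<le> fa_inf M \<nu> \<mu> E2"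
    by (intro fa_inf_greatest) (simp add: algebra_simps)
  ultimately show ?thesis
    by linarith
qed

lemma pos_fa_measure_fa_inf: "pos_fa_measure M (fa_inf M \<nu> \<mu>)"
proof -
  obtain C where C: "\<forall>A\<in>sets M. \<bar>\<nu> A\<bar> \<le> C"
    using fa(1) by (auto simp: fa_measure_def)
  have "\<bar>fa_inf M \<nu> \<mu> A\<bar> \<le> C" if "A \<in> sets M" for A
    using C fa_inf_nonneg[OF that] fa_inf_le_left[OF that] that by fastforce
  moreover have "fa_inf M \<nu> \<mu> {} = 0"
    using fa_inf_nonneg[of "{}"] fa_inf_le_left[of "{}"] fa_measure_empty[OF fa(1)] by simp
  ultimately show ?thesis
    unfolding pos_fa_measure_def fa_measure_def using fa_inf_nonneg fa_inf_Un by blast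
qed

end

lemma le_if_fa_inf_eq_zero:
  assumes \<nu>: "pos_fa_measure M \<nu>" and \<mu>1: "pos_fa_measure M \<mu>1" and \<mu>2: "pos_fa_measure M \<mu>2"
    and le: "\<forall>A\<in>sets M. \<nu> A \<le> \<mu>1 A + \<mu>2 A"
    and inf0: "\<forall>A\<in>sets M. fa_inf M \<nu> \<mu>1 A = 0"
    and E: "E \<in> sets M"
  shows "\<nu> E \<le> \<mu>2 E"
proof (rule field_le_epsilon)
  fix e :: real assume "0 < e"
  then have "\<not> (\<forall>F. F \<in> sets M \<longrightarrow> F \<subseteq> E \<longrightarrow> e \<le> \<nu> F + \<mu>1 (E - F))"
    using fa_inf_greatest[OF \<nu> \<mu>1, of E e] inf0 E by auto
  then obtain F where F: "F \<in> sets M" "F \<subseteq> E" and less: "\<nu> F + \<mu>1 (E - F) < e"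
    by (auto simp: not_le)
  have EF: "E - F \<in> sets M"
    using F E by auto
  have "\<nu> E = \<nu> F + \<nu> (E - F)"
    using \<nu> F E by (auto simp: pos_fa_measure_def intro: fa_measure_Diff)
  also have "\<dots> \<le> \<nu> F + \<mu>1 (E - F) + \<mu>2 (E - F)"
    using le EF by auto
  also have "\<dots> \<le> e + \<mu>2 E"
    using less pos_fa_measure_mono[OF \<mu>2 E EF] by auto
  finally show "\<nu> E \<le> \<mu>2 E + e"
    by simp
qed

lemma pure_fa_add:
  assumes pure1: "pure_fa M \<mu>1" and pure2: "pure_fa M \<mu>2"
  shows "pure_fa M (\<lambda>E. \<mu>1 E + \<mu>2 E)"
proof (rule pure_faI)
  have \<mu>1: "pos_fa_measure M \<mu>1" and \<mu>2: "pos_fa_measure M \<mu>2"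
    using pure1 pure2 by (simp_all add: pure_fa_imp_pos_fa_measure)
  then show "pos_fa_measure M (\<lambda>E. \<mu>1 E + \<mu>2 E)"
    by (rule pos_fa_measure_add)
  fix \<nu> A
  assume \<nu>: "pos_fa_measure M \<nu>" and ca: "ca_on M \<nu>"
    and le: "\<forall>E\<in>sets M. \<nu> E \<le> \<mu>1 E + \<mu>2 E" and A: "A \<in> sets M"
  have inf: "pos_fa_measure M (fa_inf M \<nu> \<mu>1)"
    using \<nu> \<mu>1 by (rule pos_fa_measure_fa_inf)
  \<comment> \<open>The part of \<open>\<nu>\<close> below \<open>\<mu>1\<close> is countably additive, so it vanishes.\<close>
  have "ca_on M (fa_inf M \<nu> \<mu>1)"
    by (rule ca_on_dominated[OF inf _ ca])
      (use \<nu> fa_inf_le_left[OF \<nu> \<mu>1] in \<open>auto simp: pos_fa_measure_def\<close>)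
  then have "\<forall>E\<in>sets M. fa_inf M \<nu> \<mu>1 E = 0"
    using fa_inf_le_right[OF \<nu> \<mu>1] by (auto intro: pure_faD[OF pure1 inf])
  then have "\<forall>E\<in>sets M. \<nu> E \<le> \<mu>2 E"
    using le_if_fa_inf_eq_zero[OF \<nu> \<mu>1 \<mu>2 le] by blast
  then show "\<nu> A = 0"
    by (rule pure_faD[OF pure2 \<nu> ca _ A])
qed

lemma pure_fa_sum:
  fixes n :: nat
  assumes "\<forall>k\<in>{1..n}. pure_fa M (\<mu> k)"
  shows "pure_fa M (\<lambda>E. \<Sum>k=1..n. \<mu> k E)"
  using assms
proof (induction n)
  case 0
  then show ?case
    using pure_fa_zero by simp
next
  case (Suc n)
  then have "pure_fa M (\<lambda>E. (\<Sum>k=1..n. \<mu> k E) + \<mu> (Suc n) E)"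
    by (auto intro!: pure_fa_add[of M _ "\<mu> (Suc n)"])
  then show ?case
    by simp
qed

section \<open>Lower Darboux sums\<close>

definition finite_partitions :: "'a measure \<Rightarrow> 'a set set set" where
  "finite_partitions M = {P. finite P \<and> P \<subseteq> sets M \<and> disjoint P \<and> \<Union>P = space M}"

definition lower_sum :: "('a set \<Rightarrow> real) \<Rightarrow> ('a \<Rightarrow> real) \<Rightarrow> 'a set set \<Rightarrow> real" where
  "lower_sum \<mu> f P = (\<Sum>B\<in>P. (INF x\<in>B. f x) * \<mu> B)"

lemma fa_integral_eq_SUP_lower_sum:
  "fa_integral M \<mu> f = (SUP P\<in>finite_partitions M. lower_sum \<mu> f P)"
  by (simp add: fa_integral_def finite_partitions_def lower_sum_def)

lemma space_in_finite_partitions: "{space M} \<in> finite_partitions M"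
  by (simp add: finite_partitions_def)

lemma finite_partitionsD:
  assumes "P \<in> finite_partitions M"
  shows "finite P" "P \<subseteq> sets M" "disjoint P" "\<Union>P = space M"
  using assms by (simp_all add: finite_partitions_def)

lemma INF_in_unit_interval:
  assumes "B \<noteq> {}" "B \<subseteq> space M" "\<forall>x\<in>space M. 0 \<le> f x \<and> f x \<le> (1::real)"
  shows "0 \<le> (INF x\<in>B. f x)" "(INF x\<in>B. f x) \<le> 1"
proof -
  show "0 \<le> (INF x\<in>B. f x)"
    using assms by (intro cINF_greatest) auto
  obtain y where y: "y \<in> B"
    using assms(1) by blast
  have "bdd_below (f ` B)"
    using assms(2,3) by (intro bdd_belowI[where m=0]) auto
  then have "(INF x\<in>B. f x) \<le> f y"
    using y by (rule cINF_lower)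
  then show "(INF x\<in>B. f x) \<le> 1"
    using y assms(2,3) by force
qed

text \<open>Empty blocks are harmless: the infimum over \<open>{}\<close> is a junk value, but it is multiplied by \<open>\<mu> {} = 0\<close>.\<close>

lemma lower_sum_mono_measure:
  assumes \<nu>: "pos_fa_measure M \<nu>" and \<mu>: "pos_fa_measure M \<mu>" and le: "\<forall>A\<in>sets M. \<nu> A \<le> \<mu> A"
    and f: "\<forall>x\<in>space M. 0 \<le> f x \<and> f x \<le> (1::real)" and P: "P \<in> finite_partitions M"
  shows "lower_sum \<nu> f P \<le> lower_sum \<mu> f P"
  unfolding lower_sum_def
proof (rule sum_mono)
  fix B assume "B \<in> P"
  then have B: "B \<in> sets M" "B \<subseteq> space M"
    using finite_partitionsD(2)[OF P] sets.sets_into_space by auto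
  show "(INF x\<in>B. f x) * \<nu> B \<le> (INF x\<in>B. f x) * \<mu> B"
  proof (cases "B = {}")
    case True
    then show ?thesis
      using pos_fa_measure_empty[OF \<nu>] pos_fa_measure_empty[OF \<mu>] by simp
  next
    case False
    then show ?thesis
      using INF_in_unit_interval(1)[OF False B(2) f] le B(1) by (simp add: mult_left_mono)
  qed
qed

lemma lower_sum_le_measure_space:
  assumes \<mu>: "pos_fa_measure M \<mu>"
    and f: "\<forall>x\<in>space M. 0 \<le> f x \<and> f x \<le> (1::real)" and P: "P \<in> finite_partitions M"
  shows "lower_sum \<mu> f P \<le> \<mu> (space M)"
proof -
  have "(INF x\<in>B. f x) * \<mu> B \<le> \<mu> B" if "B \<in> P" for B
  proof (cases "B = {}")
    case True
    then show ?thesis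
      using pos_fa_measure_empty[OF \<mu>] by simp
  next
    case False
    have "B \<in> sets M" "B \<subseteq> space M"
      using that finite_partitionsD(2)[OF P] sets.sets_into_space by auto
    then show ?thesis
      using INF_in_unit_interval[OF False _ f] \<mu> by (simp add: pos_fa_measure_def mult_left_le_one_le)
  qed
  then have "lower_sum \<mu> f P \<le> sum \<mu> P"
    unfolding lower_sum_def by (rule sum_mono)
  also have "\<dots> = \<mu> (space M)"
    using \<mu> fa_measure_Union[of M \<mu> P] finite_partitionsD[OF P] by (simp add: pos_fa_measure_def)
  finally show ?thesis .
qed

lemma fa_integral_mono_measure:
  assumes \<nu>: "pos_fa_measure M \<nu>" and \<mu>: "pos_fa_measure M \<mu>" and le: "\<forall>A\<in>sets M. \<nu> A \<le> \<mu> A"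
    and f: "\<forall>x\<in>space M. 0 \<le> f x \<and> f x \<le> (1::real)"
  shows "fa_integral M \<nu> f \<le> fa_integral M \<mu> f"
  unfolding fa_integral_eq_SUP_lower_sum
proof (rule cSUP_mono)
  show "finite_partitions M \<noteq> {}"
    using space_in_finite_partitions by blast
  show "bdd_above ((\<lambda>P. lower_sum \<mu> f P) ` finite_partitions M)"
    using lower_sum_le_measure_space[OF \<mu> f] by (intro bdd_aboveI[where M="\<mu> (space M)"]) auto
  show "\<exists>P'\<in>finite_partitions M. lower_sum \<nu> f P \<le> lower_sum \<mu> f P'"
    if "P \<in> finite_partitions M" for P
    using that lower_sum_mono_measure[OF \<nu> \<mu> le f that] by blast
qed

section \<open>Countably additive measures and the Lebesgue integral\<close>

definition ca_measure :: "'a measure \<Rightarrow> ('a set \<Rightarrow> real) \<Rightarrow> 'a measure" where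
  "ca_measure M \<nu> = measure_of (space M) (sets M) (\<lambda>A. ennreal (\<nu> A))"

lemma sets_ca_measure [simp]: "sets (ca_measure M \<nu>) = sets M"
  by (simp add: ca_measure_def)

lemma space_ca_measure [simp]: "space (ca_measure M \<nu>) = space M"
  by (simp add: ca_measure_def)

lemma measurable_ca_measure [simp]: "measurable (ca_measure M \<nu>) N = measurable M N"
  by (rule measurable_cong_sets) simp_all

lemma emeasure_ca_measure:
  assumes \<nu>: "pos_fa_measure M \<nu>" and ca: "ca_on M \<nu>" and A: "A \<in> sets M"
  shows "emeasure (ca_measure M \<nu>) A = ennreal (\<nu> A)"
proof -
  have "positive (sets M) (\<lambda>A. ennreal (\<nu> A))"
    using pos_fa_measure_empty[OF \<nu>] by (simp add: positive_def)
  moreover have "countably_additive (sets M) (\<lambda>A. ennreal (\<nu> A))"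
    unfolding countably_additive_def
  proof (intro allI impI)
    fix F :: "nat \<Rightarrow> 'a set"
    assume F: "range F \<subseteq> sets M" "disjoint_family F"
    then have sums: "(\<lambda>n. \<nu> (F n)) sums \<nu> (\<Union>n. F n)"
      using ca by (simp add: ca_on_def)
    have "(\<Sum>n. ennreal (\<nu> (F n))) = ennreal (\<Sum>n. \<nu> (F n))"
      using F \<nu> sums by (intro suminf_ennreal2) (auto simp: pos_fa_measure_def sums_summable)
    then show "(\<Sum>n. ennreal (\<nu> (F n))) = ennreal (\<nu> (\<Union>n. F n))"
      using sums by (simp add: sums_iff)
  qed
  ultimately show ?thesis
    unfolding ca_measure_def using A by (rule emeasure_measure_of_sigma[OF sets.sigma_algebra_axioms])
qed

lemma measure_ca_measure:
  "pos_fa_measure M \<nu> \<Longrightarrow> ca_on M \<nu> \<Longrightarrow> A \<in> sets M \<Longrightarrow> measure (ca_measure M \<nu>) A = \<nu> A"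
  by (simp add: measure_def emeasure_ca_measure pos_fa_measure_def)

lemma finite_measure_ca_measure:
  "pos_fa_measure M \<nu> \<Longrightarrow> ca_on M \<nu> \<Longrightarrow> finite_measure (ca_measure M \<nu>)"
  by (rule finite_measureI) (simp add: emeasure_ca_measure)

definition step_fun :: "'a set set \<Rightarrow> ('a set \<Rightarrow> real) \<Rightarrow> 'a \<Rightarrow> real" where
  "step_fun P c x = (\<Sum>B\<in>P. c B * indicator B x)"

lemma step_fun_eq:
  assumes P: "P \<in> finite_partitions M" and S: "S \<in> P" "x \<in> S"
  shows "step_fun P c x = c S"
proof -
  have "indicator B x = (0::real)" if "B \<in> P - {S}" for B
    using that S finite_partitionsD(3)[OF P] by (auto simp: pairwise_def disjnt_def indicator_def)
  then have "(\<Sum>B\<in>P - {S}. c B * indicator B x) = 0"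
    by simp
  then show ?thesis
    using sum.remove[OF finite_partitionsD(1)[OF P] S(1), of "\<lambda>B. c B * indicator B x"] S(2)
    by (simp add: step_fun_def)
qed

text \<open>Partitioning \<open>X\<close> into the level sets of \<open>\<lfloor>n f\<rfloor>\<close> makes the oscillation of \<open>f\<close> on each block at most \<open>1/n\<close>.\<close>

lemma level_set_partition:
  fixes f :: "'a \<Rightarrow> real"
  assumes f_meas: "f \<in> borel_measurable M" and f: "\<forall>x\<in>space M. 0 \<le> f x \<and> f x \<le> 1"
    and n: "0 < n"
  shows "\<exists>P\<in>finite_partitions M. \<forall>S\<in>P. \<forall>x\<in>S. f x \<le> (INF y\<in>S. f y) + 1 / real n"
proof
  define level where "level k = {x\<in>space M. \<lfloor>f x * real n\<rfloor> = k}" for k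
  define P where "P = level ` {0..int n}"
  have "level k \<in> sets M" for k
    unfolding level_def using f_meas by measurable
  moreover have "\<lfloor>f x * real n\<rfloor> \<in> {0..int n}" if "x \<in> space M" for x
    using f that mult_right_mono[of "f x" 1 "real n"] by (auto simp: floor_le_iff)
  then have "\<Union>P = space M"
    by (auto simp: P_def level_def)
  moreover have "disjoint P"
    by (auto simp: P_def level_def pairwise_def disjnt_def)
  ultimately show "P \<in> finite_partitions M"
    by (auto simp: finite_partitions_def P_def)
  show "\<forall>S\<in>P. \<forall>x\<in>S. f x \<le> (INF y\<in>S. f y) + 1 / real n"
  proof (intro ballI)
    fix S x assume "S \<in> P" "x \<in> S"
    then obtain k where S: "S = level k" and x: "x \<in> space M" "\<lfloor>f x * real n\<rfloor> = k"
      by (auto simp: P_def level_def)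
    have "real_of_int k / real n \<le> (INF y\<in>S. f y)"
    proof (rule cINF_greatest)
      show "S \<noteq> {}"
        using \<open>x \<in> S\<close> by blast
      fix y assume "y \<in> S"
      then have "real_of_int k \<le> f y * real n"
        by (auto simp: S level_def)
      then show "real_of_int k / real n \<le> f y"
        using n by (simp add: divide_le_eq)
    qed
    moreover have "f x * real n < real_of_int k + 1"
      using x(2) by linarith
    then have "f x \<le> real_of_int k / real n + 1 / real n"
      using n by (simp add: field_simps)
    ultimately show "f x \<le> (INF y\<in>S. f y) + 1 / real n"
      by linarith
  qed
qed

context
  fixes M :: "'a measure" and \<nu> :: "'a set \<Rightarrow> real"
  assumes \<nu>: "pos_fa_measure M \<nu>" and ca: "ca_on M \<nu>"
begin

interpretation N: finite_measure "ca_measure M \<nu>"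
  using \<nu> ca by (rule finite_measure_ca_measure)

lemma integrable_step_fun: "P \<in> finite_partitions M \<Longrightarrow> integrable (ca_measure M \<nu>) (step_fun P c)"
  unfolding step_fun_def using finite_partitionsD(2)
  by (intro Bochner_Integration.integrable_sum integrable_mult_right integrable_real_indicator)
    (auto simp: emeasure_ca_measure[OF \<nu> ca])

lemma integral_step_fun:
  assumes P: "P \<in> finite_partitions M"
  shows "integral\<^sup>L (ca_measure M \<nu>) (step_fun P c) = (\<Sum>B\<in>P. c B * \<nu> B)"
proof -
  have B: "B \<in> sets M" if "B \<in> P" for B
    using that finite_partitionsD(2)[OF P] by blast
  then have "integral\<^sup>L (ca_measure M \<nu>) (step_fun P c)
      = (\<Sum>B\<in>P. integral\<^sup>L (ca_measure M \<nu>) (\<lambda>x. c B * indicator B x))"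
    unfolding step_fun_def
    by (intro Bochner_Integration.integral_sum integrable_mult_right integrable_real_indicator)
      (auto simp: emeasure_ca_measure[OF \<nu> ca])
  also have "\<dots> = (\<Sum>B\<in>P. c B * \<nu> B)"
    using B by (intro sum.cong) (simp_all add: measure_ca_measure[OF \<nu> ca])
  finally show ?thesis .
qed

context
  fixes f :: "'a \<Rightarrow> real"
  assumes f_meas: "f \<in> borel_measurable M" and f: "\<forall>x\<in>space M. 0 \<le> f x \<and> f x \<le> 1"
begin

private lemma integrable_f: "integrable (ca_measure M \<nu>) f"
  using f f_meas by (intro N.integrable_const_bound[where B=1]) auto

lemma lower_sum_le_integral:
  assumes P: "P \<in> finite_partitions M"
  shows "lower_sum \<nu> f P \<le> integral\<^sup>L (ca_measure M \<nu>) f"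
proof -
  let ?c = "\<lambda>B. INF x\<in>B. f x"
  have "step_fun P ?c x \<le> f x" if x: "x \<in> space M" for x
  proof -
    obtain S where S: "S \<in> P" "x \<in> S"
      using x finite_partitionsD(4)[OF P] by blast
    then have "S \<subseteq> space M"
      using finite_partitionsD(2)[OF P] sets.sets_into_space by blast
    then have "bdd_below (f ` S)"
      using f by (intro bdd_belowI[where m=0]) auto
    then have "?c S \<le> f x"
      using S(2) by (rule cINF_lower)
    then show ?thesis
      using step_fun_eq[OF P S] by simp
  qed
  then have "integral\<^sup>L (ca_measure M \<nu>) (step_fun P ?c) \<le> integral\<^sup>L (ca_measure M \<nu>) f"
    by (intro integral_mono integrable_step_fun[OF P] integrable_f) simp
  then show ?thesis
    by (simp add: integral_step_fun[OF P] lower_sum_def)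
qed

lemma integral_le_lower_sum:
  assumes n: "0 < n"
  shows "\<exists>P\<in>finite_partitions M. integral\<^sup>L (ca_measure M \<nu>) f \<le> lower_sum \<nu> f P + \<nu> (space M) / real n"
proof -
  let ?c = "\<lambda>B. INF x\<in>B. f x"
  obtain P where P: "P \<in> finite_partitions M" and osc: "\<forall>S\<in>P. \<forall>x\<in>S. f x \<le> ?c S + 1 / real n"
    using level_set_partition[OF f_meas f n] by (rule bexE)
  have "f x \<le> step_fun P ?c x + 1 / real n" if x: "x \<in> space M" for x
  proof -
    obtain S where S: "S \<in> P" "x \<in> S"
      using x finite_partitionsD(4)[OF P] by blast
    then show ?thesis
      using osc step_fun_eq[OF P S] by simp
  qed
  then have "integral\<^sup>L (ca_measure M \<nu>) f
      \<le> integral\<^sup>L (ca_measure M \<nu>) (\<lambda>x. step_fun P ?c x + 1 / real n)"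
    by (intro integral_mono integrable_f Bochner_Integration.integrable_add integrable_step_fun[OF P]
        N.integrable_const) simp
  also have "\<dots> = lower_sum \<nu> f P + \<nu> (space M) / real n"
    using integral_step_fun[OF P] measure_ca_measure[OF \<nu> ca sets.top]
    by (simp add: Bochner_Integration.integral_add[OF integrable_step_fun[OF P] N.integrable_const]
        lower_sum_def)
  finally show ?thesis
    by (rule bexI[OF _ P])
qed

lemma fa_integral_eq_integral:
  "fa_integral M \<nu> f = integral\<^sup>L (ca_measure M \<nu>) f"
proof (rule antisym)
  show "fa_integral M \<nu> f \<le> integral\<^sup>L (ca_measure M \<nu>) f"
    unfolding fa_integral_eq_SUP_lower_sum
    using space_in_finite_partitions lower_sum_le_integral by (intro cSUP_least) blast+
  have bdd: "bdd_above (lower_sum \<nu> f ` finite_partitions M)"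
    using lower_sum_le_integral by (intro bdd_aboveI) blast
  have "integral\<^sup>L (ca_measure M \<nu>) f - \<nu> (space M) / real n \<le> fa_integral M \<nu> f"
    if n: "0 < n" for n
  proof -
    obtain P where P: "P \<in> finite_partitions M"
      and "integral\<^sup>L (ca_measure M \<nu>) f \<le> lower_sum \<nu> f P + \<nu> (space M) / real n"
      using integral_le_lower_sum[OF n] by blast
    moreover have "lower_sum \<nu> f P \<le> fa_integral M \<nu> f"
      unfolding fa_integral_eq_SUP_lower_sum by (rule cSUP_upper[OF P bdd])
    ultimately show ?thesis
      by linarith
  qed
  then have "\<forall>n\<ge>1. integral\<^sup>L (ca_measure M \<nu>) f - \<nu> (space M) / real n \<le> fa_integral M \<nu> f"
    by simp
  moreover have "(\<lambda>n. integral\<^sup>L (ca_measure M \<nu>) f - \<nu> (space M) / real n)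
      \<longlonglongrightarrow> integral\<^sup>L (ca_measure M \<nu>) f"
    using tendsto_diff[OF tendsto_const lim_const_over_n] by simp
  ultimately show "integral\<^sup>L (ca_measure M \<nu>) f \<le> fa_integral M \<nu> f"
    using LIMSEQ_le_const2 by blast
qed

end

end

section \<open>The Markov operator\<close>

lemma transition_functionD:
  assumes "transition_function M p"
  shows "\<And>x E. x \<in> space M \<Longrightarrow> E \<in> sets M \<Longrightarrow> 0 \<le> p x E \<and> p x E \<le> 1"
    and "\<And>x. x \<in> space M \<Longrightarrow> p x (space M) = 1"
    and "\<And>E. E \<in> sets M \<Longrightarrow> (\<lambda>x. p x E) \<in> borel_measurable M"
    and "\<And>x. x \<in> space M \<Longrightarrow> ca_on M (p x)"
  using assms by (simp_all add: transition_function_def)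

lemma markov_op_mono:
  assumes "transition_function M p" "pos_fa_measure M \<nu>" "pos_fa_measure M \<mu>"
    and "\<forall>A\<in>sets M. \<nu> A \<le> \<mu> A" and "E \<in> sets M"
  shows "markov_op M p \<nu> E \<le> markov_op M p \<mu> E"
  unfolding markov_op_def
  using assms transition_functionD(1)[OF assms(1) _ assms(5)] by (intro fa_integral_mono_measure) auto

context
  fixes M :: "'a measure" and p :: "'a \<Rightarrow> 'a set \<Rightarrow> real" and \<nu> :: "'a set \<Rightarrow> real"
  assumes tf: "transition_function M p" and \<nu>: "pos_fa_measure M \<nu>" and ca: "ca_on M \<nu>"
begin

interpretation N: finite_measure "ca_measure M \<nu>"
  using \<nu> ca by (rule finite_measure_ca_measure)

lemma markov_op_eq_integral:
  "E \<in> sets M \<Longrightarrow> markov_op M p \<nu> E = integral\<^sup>L (ca_measure M \<nu>) (\<lambda>x. p x E)"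
  unfolding markov_op_def
  by (rule fa_integral_eq_integral[OF \<nu> ca transition_functionD(3)[OF tf]])
    (use transition_functionD(1)[OF tf] in auto)

private lemma integrable_transition: "E \<in> sets M \<Longrightarrow> integrable (ca_measure M \<nu>) (\<lambda>x. p x E)"
  using transition_functionD(1,3)[OF tf] by (intro N.integrable_const_bound[where B=1]) auto

lemma markov_op_space: "markov_op M p \<nu> (space M) = \<nu> (space M)"
proof -
  have "integral\<^sup>L (ca_measure M \<nu>) (\<lambda>x. p x (space M)) = integral\<^sup>L (ca_measure M \<nu>) (\<lambda>x. 1)"
    using transition_functionD(2)[OF tf] by (intro Bochner_Integration.integral_cong) auto
  then show ?thesis
    by (simp add: markov_op_eq_integral measure_ca_measure[OF \<nu> ca])
qed

text \<open>Countable additivity of \<open>A \<nu>\<close> is inherited from that of each \<open>p x\<close> by dominated convergence.\<close>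

lemma ca_on_markov_op: "ca_on M (markov_op M p \<nu>)"
  unfolding ca_on_def
proof (intro allI impI)
  fix F :: "nat \<Rightarrow> 'a set"
  assume F: "range F \<subseteq> sets M" and disj: "disjoint_family F"
  then have U: "(\<Union>n. F n) \<in> sets M"
    by auto
  have sums: "(\<lambda>i. p x (F i)) sums p x (\<Union>n. F n)" if "x \<in> space M" for x
    using transition_functionD(4)[OF tf that] F disj by (simp add: ca_on_def)
  have "norm (\<Sum>i<n. p x (F i)) \<le> 1" if x: "x \<in> space M" for x n
  proof -
    have nonneg: "0 \<le> p x (F i)" for i
      using transition_functionD(1)[OF tf x] F by auto
    then have "(\<Sum>i<n. p x (F i)) \<le> (\<Sum>i. p x (F i))"
      by (intro sum_le_suminf sums_summable[OF sums[OF x]]) auto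
    also have "\<dots> = p x (\<Union>n. F n)"
      using sums[OF x] by (rule sums_unique[symmetric])
    also have "\<dots> \<le> 1"
      using transition_functionD(1)[OF tf x U] by simp
    finally show ?thesis
      using nonneg by (simp add: sum_nonneg)
  qed
  then have bound: "AE x in ca_measure M \<nu>. norm (\<Sum>i<n. p x (F i)) \<le> 1" for n
    by (intro AE_I2) simp
  have lim: "AE x in ca_measure M \<nu>. (\<lambda>n. \<Sum>i<n. p x (F i)) \<longlonglongrightarrow> p x (\<Union>n. F n)"
    using sums by (intro AE_I2) (simp add: sums_def)
  have meas: "(\<lambda>x. \<Sum>i<n. p x (F i)) \<in> borel_measurable (ca_measure M \<nu>)" for n
    using F transition_functionD(3)[OF tf] by (simp add: borel_measurable_sum range_subsetD)
  have "(\<lambda>n. integral\<^sup>L (ca_measure M \<nu>) (\<lambda>x. \<Sum>i<n. p x (F i)))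
      \<longlonglongrightarrow> integral\<^sup>L (ca_measure M \<nu>) (\<lambda>x. p x (\<Union>n. F n))"
    using transition_functionD(3)[OF tf U]
    by (intro integral_dominated_convergence[OF _ meas N.integrable_const lim bound]) simp
  moreover have "integral\<^sup>L (ca_measure M \<nu>) (\<lambda>x. \<Sum>i<n. p x (F i)) = (\<Sum>i<n. markov_op M p \<nu> (F i))" for n
    using F integrable_transition by (subst Bochner_Integration.integral_sum) (auto simp: markov_op_eq_integral)
  ultimately show "(\<lambda>n. markov_op M p \<nu> (F n)) sums markov_op M p \<nu> (\<Union>n. F n)"
    by (simp add: sums_def markov_op_eq_integral[OF U])
qed

lemma pos_fa_measure_markov_op: "pos_fa_measure M (markov_op M p \<nu>)"
proof -
  have nonneg: "0 \<le> markov_op M p \<nu> E" if "E \<in> sets M" for E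
    using that transition_functionD(1)[OF tf]
    by (auto simp: markov_op_eq_integral intro!: Bochner_Integration.integral_nonneg)
  have "markov_op M p \<nu> E \<le> \<nu> (space M)" if E: "E \<in> sets M" for E
  proof -
    have "integral\<^sup>L (ca_measure M \<nu>) (\<lambda>x. p x E) \<le> integral\<^sup>L (ca_measure M \<nu>) (\<lambda>x. 1)"
      using transition_functionD(1)[OF tf] E integrable_transition[OF E]
      by (intro Bochner_Integration.integral_mono) auto
    then show ?thesis
      by (simp add: markov_op_eq_integral[OF E] measure_ca_measure[OF \<nu> ca])
  qed
  with nonneg have "\<forall>A\<in>sets M. \<bar>markov_op M p \<nu> A\<bar> \<le> \<nu> (space M)"
    by simp
  then show ?thesis
    using nonneg ca_on_empty[OF ca_on_markov_op] ca_on_Un[OF ca_on_markov_op]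
    by (auto simp: pos_fa_measure_def fa_measure_def)
qed

end

text \<open>If \<open>\<nu> \<le> \<mu>\<close> is countably additive and nonzero, then so is \<open>A \<nu> \<le> A \<mu>\<close>, since \<open>A\<close> preserves total mass.\<close>

lemma pure_fa_if_markov_op_pure_fa:
  assumes tf: "transition_function M p" and \<mu>: "pos_fa_measure M \<mu>"
    and pure: "pure_fa M \<mu>'" and A\<mu>: "\<forall>E\<in>sets M. markov_op M p \<mu> E = \<mu>' E"
  shows "pure_fa M \<mu>"
proof (rule pure_faI[OF \<mu>])
  fix \<nu> A
  assume \<nu>: "pos_fa_measure M \<nu>" and ca: "ca_on M \<nu>" and le: "\<forall>E\<in>sets M. \<nu> E \<le> \<mu> E"
    and A: "A \<in> sets M"
  have "\<forall>E\<in>sets M. markov_op M p \<nu> E \<le> \<mu>' E"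
    using markov_op_mono[OF tf \<nu> \<mu> le] A\<mu> by simp
  then have "markov_op M p \<nu> (space M) = 0"
    by (rule pure_faD[OF pure pos_fa_measure_markov_op[OF tf \<nu> ca] ca_on_markov_op[OF tf \<nu> ca] _ sets.top])
  then have "\<nu> (space M) = 0"
    by (simp add: markov_op_space[OF tf \<nu> ca])
  moreover have "0 \<le> \<nu> A" "\<nu> A \<le> \<nu> (space M)"
    using \<nu> A pos_fa_measure_mono[OF \<nu> sets.top A sets.sets_into_space[OF A]]
    by (auto simp: pos_fa_measure_def)
  ultimately show "\<nu> A = 0"
    by simp
qed

section \<open>Cycles of measures\<close>

text \<open>Purity propagates backwards along a cycle, hence all the way around it.\<close>

lemma cycle_pure_fa_downwards:
  assumes tf: "transition_function M p" and cycle: "is_cycle M p m \<mu>"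
    and "1 \<le> i" "i \<le> j" "j \<le> m" and pure: "pure_fa M (\<mu> j)"
  shows "pure_fa M (\<mu> i)"
  using \<open>i \<le> j\<close> pure \<open>1 \<le> i\<close> \<open>j \<le> m\<close>
proof (induction rule: inc_induct)
  case (step k)
  then show ?case
    using cycle by (intro pure_fa_if_markov_op_pure_fa[OF tf, of "\<mu> k" "\<mu> (Suc k)"])
      (auto simp: is_cycle_def)
qed

lemma cycle_pure_fa_all:
  assumes tf: "transition_function M p" and cycle: "is_cycle M p m \<mu>"
    and j: "j \<in> {1..m}" and pure: "pure_fa M (\<mu> j)" and i: "i \<in> {1..m}"
  shows "pure_fa M (\<mu> i)"
proof -
  have "pure_fa M (\<mu> 1)"
    using cycle_pure_fa_downwards[OF tf cycle _ _ _ pure] j by auto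
  then have "pure_fa M (\<mu> m)"
    using cycle by (intro pure_fa_if_markov_op_pure_fa[OF tf, of "\<mu> m" "\<mu> 1"]) (auto simp: is_cycle_def)
  then show ?thesis
    using cycle_pure_fa_downwards[OF tf cycle] i by auto
qed

theorem theorem4p3:
  fixes M :: "'a measure" and p :: "'a \<Rightarrow> 'a set \<Rightarrow> real"
    and m :: nat and \<mu> :: "nat \<Rightarrow> 'a set \<Rightarrow> real"
  assumes "std_space M"
    and "transition_function M p"
    and "is_cycle M p m \<mu>"
    and "\<exists>i\<in>{1..m}. pure_fa M (\<mu> i)"
  shows "(\<forall>i\<in>{1..m}. pure_fa M (\<mu> i)) \<and> pure_fa M (mean_measure m \<mu>)"
proof -
  have all: "\<forall>i\<in>{1..m}. pure_fa M (\<mu> i)"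
    using cycle_pure_fa_all[OF assms(2,3)] assms(4) by blast
  have "0 < 1 / real m"
    using assms(3) by (simp add: is_cycle_def)
  with pure_fa_sum[OF all] have "pure_fa M (mean_measure m \<mu>)"
    unfolding mean_measure_def by (rule pure_fa_scale)
  with all show ?thesis
    by blast
qed

end
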